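(* Let $d\ge2$, $T>0$ and let $h_T\in L^2_{\mathrm{loc}}(\mathbb{Z}^d)$ be such that for all $R\gg1$, \[ \text{for } d=2:\ \sum_{R<|z|\le2R}h_T^2(z)\lesssim\min\{1,\sqrt T R^{-1}\}^2,\qquad\text{for } d>2:\ \sum_{R<|z|\le2R}h_T^2(z)\lesssim R^{2-d}, \] and for $R\sim1$ (and all $d\ge2$), $\sum_{|z|\le R}h_T^2(z)\lesssim1$. Then for $R\gg1$, \[ \text{for } d=2:\ \sum_{|x|\le R}\sum_{z\in\mathbb{Z}^d}h_T(z)h_T(z-x)\lesssim R^2\max\{1,\ln(\sqrt T R^{-1})\},\qquad \text{for } d>2:\ \sum_{|x|\le R}\sum_{z\in\mathbb{Z}^d}h_T(z)h_T(z-x)\lesssim R^2. \]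
   Context: Sums over regions are over lattice points of $\mathbb{Z}^d$. $X\lesssim Y$ means $X\le CY$ with a constant $C$ independent of $R$ and $T$ (the constant in the conclusion depends on $d$ and on the constants in the hypotheses); $R\gg1$ means $R\ge R_0$ for such a constant, and $R\sim1$ means $R$ is of order one. *)

theory Defs
  imports "HOL-Analysis.Analysis"
begin

text \<open>Euclidean norm of a lattice point of Z^d, where d = CARD('n).\<close>
definition znorm :: "int ^ 'n \<Rightarrow> real" where
  "znorm z = norm ((\<chi> i. real_of_int (z $ i)) :: real ^ 'n)"

end

theory Submission
  imports Defs
begin

text \<open>Cauchy--Schwarz on each dyadic shell turns the \<open>L\<^sup>2\<close> shell bounds into
  \<open>\<Sum>\<^bsub>|z| \<le> 2R\<^esub> |h T z| = O(R)\<close>. For \<open>|x| \<le> R\<close>, the terms of the correlation with both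
  \<open>z\<close> and \<open>z - x\<close> in the ball of radius \<open>2R\<close> add up, over all such \<open>x\<close>, to at most the square
  of that sum, hence \<open>O(R\<^sup>2)\<close>. In every other term one of the two points lies beyond radius \<open>R\<close>,
  so these terms are controlled by the \<open>L\<^sup>2\<close> tail beyond \<open>R\<close>. Summing the shell bounds, this
  tail is \<open>O(R\<^bsup>2-d\<^esup>)\<close> for \<open>d > 2\<close> and \<open>O(max 1 (ln (\<surd>T / R)))\<close> for \<open>d = 2\<close>, and there
  are \<open>O(R\<^sup>d)\<close> shifts \<open>x\<close>.\<close>

lemma znorm_diff_eq:
  "znorm (z - x) = norm ((\<chi> i. real_of_int (z $ i)) - (\<chi> i. real_of_int (x $ i)) :: real ^ 'n)"
proof -
  have "(\<chi> i. real_of_int ((z - x) $ i)) = ((\<chi> i. real_of_int (z $ i)) - (\<chi> i. real_of_int (x $ i)) :: real ^ 'n)"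
    by (simp add: vec_eq_iff)
  then show ?thesis by (simp only: znorm_def)
qed

lemma znorm_nonneg: "0 \<le> znorm z"
  by (simp add: znorm_def)

lemma znorm_diff_le: "znorm (z - x) \<le> znorm z + znorm x"
  unfolding znorm_diff_eq unfolding znorm_def by (rule norm_triangle_ineq4)

lemma znorm_le_diff:
  fixes z x :: "int ^ 'n"
  shows "znorm z \<le> znorm (z - x) + znorm x"
  unfolding znorm_diff_eq unfolding znorm_def
  using norm_triangle_sub[of "(\<chi> i. real_of_int (z $ i)) :: real ^ 'n" "\<chi> i. real_of_int (x $ i)"]
  by linarith

lemma abs_component_le_znorm:
  fixes z :: "int ^ 'n"
  shows "\<bar>real_of_int (z $ i)\<bar> \<le> znorm z"
  using component_le_norm_cart[of "(\<chi> i. real_of_int (z $ i)) :: real ^ 'n" i]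
  by (simp add: znorm_def)

lemma znorm_ball_subset_box:
  "{z :: int ^ 'n. znorm z \<le> r} \<subseteq> vec_lambda ` (\<Pi>\<^sub>E i\<in>UNIV. {-\<lfloor>r\<rfloor>..\<lfloor>r\<rfloor>})"
proof
  fix z :: "int ^ 'n"
  assume "z \<in> {z. znorm z \<le> r}"
  then have "\<bar>real_of_int (z $ i)\<bar> \<le> r" for i
    using abs_component_le_znorm[of z i] by simp
  then have "z $ i \<le> \<lfloor>r\<rfloor>" "- (z $ i) \<le> \<lfloor>r\<rfloor>" for i
    by (simp_all add: le_floor_iff abs_le_iff)
  then have "z $ i \<in> {-\<lfloor>r\<rfloor>..\<lfloor>r\<rfloor>}" for i
    by (simp add: minus_le_iff)
  then have "vec_nth z \<in> (\<Pi>\<^sub>E i\<in>UNIV. {-\<lfloor>r\<rfloor>..\<lfloor>r\<rfloor>})" by auto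
  then show "z \<in> vec_lambda ` (\<Pi>\<^sub>E i\<in>UNIV. {-\<lfloor>r\<rfloor>..\<lfloor>r\<rfloor>})"
    by (metis image_eqI vec_nth_inverse)
qed

lemma finite_znorm_ball: "finite {z :: int ^ 'n. znorm z \<le> r}"
  by (rule finite_subset[OF znorm_ball_subset_box]) (simp add: finite_PiE)

lemma card_znorm_ball_le:
  assumes "0 \<le> r"
  shows "real (card {z :: int ^ 'n. znorm z \<le> r}) \<le> (2 * r + 1) ^ CARD('n)"
proof -
  have "card {z :: int ^ 'n. znorm z \<le> r} \<le> card (vec_lambda ` (\<Pi>\<^sub>E i\<in>(UNIV :: 'n set). {-\<lfloor>r\<rfloor>..\<lfloor>r\<rfloor>}))"
    by (intro card_mono znorm_ball_subset_box) (simp add: finite_PiE)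
  also have "\<dots> \<le> card (\<Pi>\<^sub>E i\<in>(UNIV :: 'n set). {-\<lfloor>r\<rfloor>..\<lfloor>r\<rfloor>})"
    by (rule card_image_le) (simp add: finite_PiE)
  also have "\<dots> = nat (2 * \<lfloor>r\<rfloor> + 1) ^ CARD('n)"
    by (simp add: card_PiE)
  finally have "real (card {z :: int ^ 'n. znorm z \<le> r}) \<le> real (nat (2 * \<lfloor>r\<rfloor> + 1)) ^ CARD('n)"
    by (metis of_nat_le_iff of_nat_power)
  also have "\<dots> \<le> (2 * r + 1) ^ CARD('n)"
    using assms by (intro power_mono) auto
  finally show ?thesis .
qed

lemma sum_sublevel_double:
  fixes N :: "'a \<Rightarrow> real"
  assumes fin: "\<And>r. finite {z. N z \<le> r}" and "0 \<le> r"
  shows "(\<Sum>z\<in>{z. N z \<le> 2 * r}. a z)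
           = (\<Sum>z\<in>{z. N z \<le> r}. a z) + (\<Sum>z\<in>{z. r < N z \<and> N z \<le> 2 * r}. a z)"
proof -
  have split: "{z. N z \<le> 2 * r} = {z. N z \<le> r} \<union> {z. r < N z \<and> N z \<le> 2 * r}"
    using \<open>0 \<le> r\<close> by auto
  have "finite {z. r < N z \<and> N z \<le> 2 * r}"
    by (rule finite_subset[OF _ fin[of "2 * r"]]) auto
  then show ?thesis
    unfolding split by (intro sum.union_disjoint fin) auto
qed

lemma sum_sublevel_dyadic:
  fixes N :: "'a \<Rightarrow> real"
  assumes fin: "\<And>r. finite {z. N z \<le> r}" and "0 \<le> r"
  shows "(\<Sum>z\<in>{z. N z \<le> 2 ^ n * r}. a z)
           = (\<Sum>z\<in>{z. N z \<le> r}. a z)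
             + (\<Sum>k<n. \<Sum>z\<in>{z. 2 ^ k * r < N z \<and> N z \<le> 2 * (2 ^ k * r)}. a z)"
proof (induction n)
  case (Suc n)
  have "(\<Sum>z\<in>{z. N z \<le> 2 ^ Suc n * r}. a z) = (\<Sum>z\<in>{z. N z \<le> 2 * (2 ^ n * r)}. a z)"
    by (simp add: mult.assoc)
  also have "\<dots> = (\<Sum>z\<in>{z. N z \<le> 2 ^ n * r}. a z)
                   + (\<Sum>z\<in>{z. 2 ^ n * r < N z \<and> N z \<le> 2 * (2 ^ n * r)}. a z)"
    using \<open>0 \<le> r\<close> by (intro sum_sublevel_double fin) simp
  finally show ?case
    using Suc.IH by (simp add: add.assoc)
qed simp

lemma sublevel_sum_le_of_linear_shells:
  fixes N :: "'a \<Rightarrow> real"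
  assumes fin: "\<And>r. finite {z. N z \<le> r}"
    and "0 < R0" "0 \<le> K" and a_nonneg: "\<And>z. 0 \<le> a z"
    and shells: "\<And>r. R0 \<le> r \<Longrightarrow> (\<Sum>z\<in>{z. r < N z \<and> N z \<le> 2 * r}. a z) \<le> K * r"
    and "0 \<le> r"
  shows "(\<Sum>z\<in>{z. N z \<le> r}. a z) \<le> 2 * K * r + (\<Sum>z\<in>{z. N z \<le> 2 * R0}. a z)"
proof -
  define S where "S r = (\<Sum>z\<in>{z. N z \<le> r}. a z)" for r
  have base: "S r \<le> 2 * K * r + S (2 * R0)" if "0 \<le> r" "r \<le> 2 * R0" for r
  proof -
    have "S r \<le> S (2 * R0)"
      unfolding S_def using that by (intro sum_mono2 fin) (auto simp: a_nonneg)
    then show ?thesis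
      using that \<open>0 \<le> K\<close> by (simp add: add_increasing)
  qed
  have dyadic: "S r \<le> 2 * K * r + S (2 * R0)" if "0 \<le> r" "r \<le> 2 ^ n * (2 * R0)" for n r
    using that
  proof (induction n arbitrary: r)
    case 0
    then show ?case using base by simp
  next
    case (Suc n)
    show ?case
    proof (cases "r \<le> 2 * R0")
      case True
      then show ?thesis using base Suc.prems by blast
    next
      case False
      have "S r = S (r / 2) + (\<Sum>z\<in>{z. r / 2 < N z \<and> N z \<le> 2 * (r / 2)}. a z)"
        unfolding S_def using sum_sublevel_double[OF fin, of "r / 2" a] Suc.prems by simp
      also have "\<dots> \<le> (2 * K * (r / 2) + S (2 * R0)) + K * (r / 2)"
        using Suc.prems False by (intro add_mono Suc.IH shells) auto
      also have "\<dots> \<le> 2 * K * r + S (2 * R0)"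
        using \<open>0 \<le> K\<close> Suc.prems by simp
      finally show ?thesis .
    qed
  qed
  obtain n where "r / (2 * R0) < 2 ^ n"
    using real_arch_pow[of 2 "r / (2 * R0)"] by auto
  then have "r < 2 ^ n * (2 * R0)"
    using \<open>0 < R0\<close> by (simp add: divide_less_eq)
  then show ?thesis
    using dyadic[of r n] \<open>0 \<le> r\<close> unfolding S_def by simp
qed

lemma tail_sum_le_of_telescoping_shells:
  fixes N a :: "'a \<Rightarrow> real" and b :: "real \<Rightarrow> real"
  assumes fin: "\<And>r. finite {z. N z \<le> r}"
    and "0 < R0" and a_nonneg: "\<And>z. 0 \<le> a z"
    and shells: "\<And>r. R0 \<le> r \<Longrightarrow> (\<Sum>z\<in>{z. r < N z \<and> N z \<le> 2 * r}. a z) \<le> b r - b (2 * r)"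
    and b_nonneg: "\<And>r. R0 \<le> r \<Longrightarrow> 0 \<le> b r"
    and "R0 \<le> R" "finite F" "F \<subseteq> {z. R < N z}"
  shows "sum a F \<le> b R"
proof -
  have "0 < R" using \<open>0 < R0\<close> \<open>R0 \<le> R\<close> by simp
  obtain n where "(\<Sum>z\<in>F. \<bar>N z\<bar>) / R < 2 ^ n"
    using real_arch_pow[of 2 "(\<Sum>z\<in>F. \<bar>N z\<bar>) / R"] by auto
  then have "N z \<le> 2 ^ n * R" if "z \<in> F" for z
    using member_le_sum[of z F "\<lambda>z. \<bar>N z\<bar>"] that \<open>finite F\<close> \<open>0 < R\<close>
    by (simp add: divide_less_eq)
  then have F_sub: "F \<subseteq> {z. N z \<le> 2 ^ n * R} - {z. N z \<le> R}"
    using \<open>F \<subseteq> {z. R < N z}\<close> by force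
  have R_sub: "{z. N z \<le> R} \<subseteq> {z. N z \<le> 2 ^ n * R}"
    using \<open>0 < R\<close> by (auto intro: order_trans[of _ R] simp: mult_le_cancel_right1)
  have "sum a F \<le> (\<Sum>z\<in>{z. N z \<le> 2 ^ n * R} - {z. N z \<le> R}. a z)"
    using F_sub by (intro sum_mono2 finite_Diff fin) (auto simp: a_nonneg)
  also have "\<dots> = (\<Sum>k<n. \<Sum>z\<in>{z. 2 ^ k * R < N z \<and> N z \<le> 2 * (2 ^ k * R)}. a z)"
    using sum_sublevel_dyadic[OF fin, of R a n] \<open>0 < R\<close> by (simp add: sum_diff R_sub fin)
  also have "\<dots> \<le> (\<Sum>k<n. b (2 ^ k * R) - b (2 ^ Suc k * R))"
  proof (intro sum_mono)
    fix k
    have "R0 \<le> 2 ^ k * R"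
      using \<open>R0 \<le> R\<close> \<open>0 < R\<close> by (smt (verit) mult_le_cancel_right1 one_le_power)
    then show "(\<Sum>z\<in>{z. 2 ^ k * R < N z \<and> N z \<le> 2 * (2 ^ k * R)}. a z)
                 \<le> b (2 ^ k * R) - b (2 ^ Suc k * R)"
      using shells by (simp add: mult.assoc)
  qed
  also have "\<dots> = b R - b (2 ^ n * R)"
    by (subst sum_lessThan_telescope'[of "\<lambda>k. b (2 ^ k * R)"]) simp
  also have "\<dots> \<le> b R"
    using b_nonneg[of "2 ^ n * R"] \<open>R0 \<le> R\<close> \<open>0 < R\<close>
    by (smt (verit) mult_le_cancel_right1 one_le_power)
  finally show ?thesis .
qed

lemma tail_sum_le_of_power_shells:
  fixes N a :: "'a \<Rightarrow> real"
  assumes fin: "\<And>r. finite {z. N z \<le> r}"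
    and "0 < R0" "0 \<le> C" "p \<le> -1" "\<And>z. 0 \<le> a z"
    and shells: "\<And>r. R0 \<le> r \<Longrightarrow> (\<Sum>z\<in>{z. r < N z \<and> N z \<le> 2 * r}. a z) \<le> C * r powr p"
    and "R0 \<le> R" "finite F" "F \<subseteq> {z. R < N z}"
  shows "sum a F \<le> 2 * C * R powr p"
proof (rule tail_sum_le_of_telescoping_shells[OF fin \<open>0 < R0\<close>, where b = "\<lambda>r. 2 * C * r powr p"])
  fix r assume "R0 \<le> r"
  then have "0 < r" using \<open>0 < R0\<close> by simp
  have "(2::real) powr p \<le> 2 powr (-1)"
    using \<open>p \<le> -1\<close> by (intro powr_mono) auto
  then have "(2 * r) powr p \<le> 1/2 * r powr p"
    using \<open>0 < r\<close> by (simp add: powr_mult powr_minus mult_right_mono)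
  then have "2 * C * (2 * r) powr p \<le> 2 * C * (1/2 * r powr p)"
    using \<open>0 \<le> C\<close> by (intro mult_left_mono) auto
  then have "C * r powr p \<le> 2 * C * r powr p - 2 * C * (2 * r) powr p"
    by simp
  then show "(\<Sum>z\<in>{z. r < N z \<and> N z \<le> 2 * r}. a z) \<le> 2 * C * r powr p - 2 * C * (2 * r) powr p"
    using shells[OF \<open>R0 \<le> r\<close>] by linarith
qed (use assms in auto)

text \<open>A majorant of \<open>\<Sum>\<^sub>k (min 1 (u / 2^k))^2\<close> of logarithmic growth: by
  \<open>log_majorant_halving\<close>, the planar shell bounds beyond radius \<open>R\<close> sum to at most
  \<open>C * log_majorant (s / R)\<close>.\<close>

definition log_majorant :: "real \<Rightarrow> real" where
  "log_majorant u = (if u \<le> 1 then 4/3 * u^2 else 4/3 + 2 * ln u)"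

lemma log_majorant_nonneg: "0 \<le> log_majorant u"
  unfolding log_majorant_def by auto

lemma log_majorant_le:
  assumes "0 \<le> u"
  shows "log_majorant u \<le> 4 * max 1 (ln u)"
proof (cases "u \<le> 1")
  case True
  then have "u^2 \<le> 1" using assms by (simp add: power_le_one)
  then show ?thesis using True unfolding log_majorant_def by simp
next
  case False
  then show ?thesis unfolding log_majorant_def by (simp add: max_def)
qed

lemma log_majorant_halving:
  assumes "0 \<le> u"
  shows "(min 1 u)^2 + log_majorant (u / 2) \<le> log_majorant u"
proof -
  consider "u \<le> 1" | "1 < u" "u \<le> 2" | "2 < u" by linarith
  then show ?thesis
  proof cases
    case 1
    then show ?thesis unfolding log_majorant_def by (simp add: power_divide min_def)
  next
    case 2
    have "1 - 1/u \<le> ln u"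
      using ln_le_minus_one[of "1/u"] 2 by (simp add: ln_div)
    moreover have "(u - 1) * ((u - 2) * (u + 3)) \<le> 0"
      using 2 by (intro mult_nonneg_nonpos mult_nonpos_nonneg) auto
    then have "1 + 4/3 * (u/2)^2 \<le> 4/3 + 2 * (1 - 1/u)"
      using 2 by (simp add: field_simps power2_eq_square)
    ultimately show ?thesis
      using 2 unfolding log_majorant_def by (simp add: min_def)
  next
    case 3
    have "1/2 \<le> ln (2::real)"
      using ln_le_minus_one[of "1/2::real"] by (simp add: ln_div)
    then show ?thesis
      using 3 unfolding log_majorant_def by (simp add: ln_div min_def)
  qed
qed

lemma tail_sum_le_of_planar_shells:
  fixes N a :: "'a \<Rightarrow> real"
  assumes fin: "\<And>r. finite {z. N z \<le> r}"
    and "0 < R0" "0 \<le> C" "0 \<le> s" "\<And>z. 0 \<le> a z"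
    and shells: "\<And>r. R0 \<le> r \<Longrightarrow> (\<Sum>z\<in>{z. r < N z \<and> N z \<le> 2 * r}. a z) \<le> C * (min 1 (s / r))^2"
    and "R0 \<le> R" "finite F" "F \<subseteq> {z. R < N z}"
  shows "sum a F \<le> C * log_majorant (s / R)"
proof (rule tail_sum_le_of_telescoping_shells[OF fin \<open>0 < R0\<close>, where b = "\<lambda>r. C * log_majorant (s / r)"])
  fix r assume "R0 \<le> r"
  then have "(min 1 (s / r))^2 + log_majorant (s / (2 * r)) \<le> log_majorant (s / r)"
    using log_majorant_halving[of "s / r"] \<open>0 < R0\<close> \<open>0 \<le> s\<close> by (simp add: mult.commute)
  then have "C * (min 1 (s / r))^2 \<le> C * log_majorant (s / r) - C * log_majorant (s / (2 * r))"
    using \<open>0 \<le> C\<close> by (smt (verit) distrib_left mult_left_mono)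
  then show "(\<Sum>z\<in>{z. r < N z \<and> N z \<le> 2 * r}. a z)
               \<le> C * log_majorant (s / r) - C * log_majorant (s / (2 * r))"
    using shells[OF \<open>R0 \<le> r\<close>] by linarith
qed (use assms log_majorant_nonneg in auto)

lemma sum_abs_le_sqrt_card_sum_squares:
  fixes g :: "'a \<Rightarrow> real"
  shows "(\<Sum>z\<in>A. \<bar>g z\<bar>) \<le> sqrt (real (card A) * (\<Sum>z\<in>A. (g z)^2))"
  using sum_squared_le_sum_of_squares[of "\<lambda>z. \<bar>g z\<bar>" A]
  by (intro real_le_rsqrt) (simp add: mult.commute)

lemma power_mult_powr_diff:
  fixes r :: real
  assumes "0 < r"
  shows "r ^ n * r powr (p - real n) = r powr p"
  using assms by (simp add: powr_realpow[symmetric] powr_add[symmetric])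

lemma card_znorm_ball_le_power:
  assumes "1 \<le> r"
  shows "real (card {z :: int ^ 'n. znorm z \<le> r}) \<le> 3 ^ CARD('n) * r ^ CARD('n)"
proof -
  have "real (card {z :: int ^ 'n. znorm z \<le> r}) \<le> (2 * r + 1) ^ CARD('n)"
    using assms by (intro card_znorm_ball_le) simp
  also have "\<dots> \<le> (3 * r) ^ CARD('n)"
    using assms by (intro power_mono) auto
  finally show ?thesis by (simp add: power_mult_distrib)
qed

lemma znorm_shell_abs_sum_le:
  fixes g :: "int ^ 'n \<Rightarrow> real"
  assumes "1 \<le> r" "0 \<le> C"
    and "(\<Sum>z\<in>{z. r < znorm z \<and> znorm z \<le> 2 * r}. (g z)^2) \<le> C * r powr (2 - real CARD('n))"
  shows "(\<Sum>z\<in>{z. r < znorm z \<and> znorm z \<le> 2 * r}. \<bar>g z\<bar>) \<le> sqrt (C * 5 ^ CARD('n)) * r"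
proof -
  define S where "S = {z :: int ^ 'n. r < znorm z \<and> znorm z \<le> 2 * r}"
  have "card S \<le> card {z :: int ^ 'n. znorm z \<le> 2 * r}"
    unfolding S_def by (intro card_mono finite_znorm_ball) auto
  then have "real (card S) \<le> (2 * (2 * r) + 1) ^ CARD('n)"
    using card_znorm_ball_le[of "2 * r", where 'n = 'n] assms(1) by simp
  also have "\<dots> \<le> (5 * r) ^ CARD('n)"
    using assms(1) by (intro power_mono) auto
  also have "\<dots> = 5 ^ CARD('n) * r ^ CARD('n)"
    by (rule power_mult_distrib)
  finally have card_S: "real (card S) \<le> 5 ^ CARD('n) * r ^ CARD('n)" .
  have "(\<Sum>z\<in>S. \<bar>g z\<bar>) \<le> sqrt (real (card S) * (\<Sum>z\<in>S. (g z)^2))"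
    by (rule sum_abs_le_sqrt_card_sum_squares)
  also have "\<dots> \<le> sqrt (5 ^ CARD('n) * r ^ CARD('n) * (C * r powr (2 - real CARD('n))))"
    using card_S assms(2,3) unfolding S_def by (intro real_sqrt_le_mono mult_mono) (auto simp: sum_nonneg)
  also have "5 ^ CARD('n) * r ^ CARD('n) * (C * r powr (2 - real CARD('n))) = C * 5 ^ CARD('n) * r^2"
    using power_mult_powr_diff[of r "CARD('n)" 2] assms(1) by (simp add: algebra_simps)
  also have "sqrt (C * 5 ^ CARD('n) * r^2) = sqrt (C * 5 ^ CARD('n)) * r"
    using assms(1) by (simp add: real_sqrt_mult)
  finally show ?thesis unfolding S_def .
qed

lemma znorm_ball_abs_sum_le:
  fixes g :: "int ^ 'n \<Rightarrow> real"
  assumes "1 \<le> R0" "0 \<le> C"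
    and shells: "\<And>r. R0 \<le> r \<Longrightarrow>
      (\<Sum>z\<in>{z. r < znorm z \<and> znorm z \<le> 2 * r}. (g z)^2) \<le> C * r powr (2 - real CARD('n))"
    and base: "(\<Sum>z\<in>{z. znorm z \<le> 2 * R0}. (g z)^2) \<le> B"
    and "R0 \<le> R"
  shows "(\<Sum>z\<in>{z. znorm z \<le> 2 * R}. \<bar>g z\<bar>)
           \<le> (4 * sqrt (C * 5 ^ CARD('n)) + sqrt (real (card {z :: int ^ 'n. znorm z \<le> 2 * R0}) * B)) * R"
proof -
  define K where "K = sqrt (C * 5 ^ CARD('n))"
  define A0 where "A0 = sqrt (real (card {z :: int ^ 'n. znorm z \<le> 2 * R0}) * B)"
  have "(\<Sum>z\<in>{z. znorm z \<le> 2 * R}. \<bar>g z\<bar>) \<le> 2 * K * (2 * R) + (\<Sum>z\<in>{z. znorm z \<le> 2 * R0}. \<bar>g z\<bar>)"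
  proof (rule sublevel_sum_le_of_linear_shells[OF finite_znorm_ball])
    show "(\<Sum>z\<in>{z. r < znorm z \<and> znorm z \<le> 2 * r}. \<bar>g z\<bar>) \<le> K * r" if "R0 \<le> r" for r
      unfolding K_def using that assms by (intro znorm_shell_abs_sum_le shells) auto
  qed (use assms in \<open>auto simp: K_def\<close>)
  also have "(\<Sum>z\<in>{z. znorm z \<le> 2 * R0}. \<bar>g z\<bar>) \<le> A0"
    unfolding A0_def
    using sum_abs_le_sqrt_card_sum_squares[of g "{z. znorm z \<le> 2 * R0}"] base
    by (smt (verit) real_sqrt_le_mono mult_left_mono of_nat_0_le_iff)
  also have "A0 \<le> A0 * R"
  proof -
    have "0 \<le> B"
      using base sum_nonneg[of "{z. znorm z \<le> 2 * R0}" "\<lambda>z. (g z)^2"] by simp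
    then have "0 \<le> A0"
      unfolding A0_def by simp
    then show ?thesis
      using assms(1,5) by (simp add: mult_le_cancel_left1)
  qed
  finally show ?thesis
    unfolding K_def A0_def by (simp add: algebra_simps)
qed

text \<open>Off the ball of radius \<open>2 R\<close> one of \<open>z\<close>, \<open>z - x\<close> lies beyond radius \<open>R\<close>, so
  \<open>g z * g (z - x) \<le> ((g z)^2 + (g (z - x))^2) / 2\<close> hands those terms to the tail bound.
  If the series diverges, \<open>infsum\<close> is \<open>0\<close> and the bound holds trivially.\<close>

lemma infsum_shift_product_le:
  fixes g :: "int ^ 'n \<Rightarrow> real"
  assumes tail: "\<And>F. finite F \<Longrightarrow> F \<subseteq> {z. R < znorm z} \<Longrightarrow> (\<Sum>z\<in>F. (g z)^2) \<le> B"
    and "znorm x \<le> R"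
  shows "infsum (\<lambda>z. g z * g (z - x)) UNIV
           \<le> (\<Sum>z\<in>{z. znorm z \<le> 2 * R \<and> znorm (z - x) \<le> 2 * R}. \<bar>g z\<bar> * \<bar>g (z - x)\<bar>) + B"
proof -
  define S where "S = {z. znorm z \<le> 2 * R \<and> znorm (z - x) \<le> 2 * R}"
  have "0 \<le> R" using \<open>znorm x \<le> R\<close> znorm_nonneg[of x] by linarith
  have "finite S"
    unfolding S_def by (rule finite_subset[OF _ finite_znorm_ball[of "2 * R"]]) auto
  have "0 \<le> B" using tail[of "{}"] by simp
  have finite_sums: "(\<Sum>z\<in>F. g z * g (z - x)) \<le> (\<Sum>z\<in>S. \<bar>g z\<bar> * \<bar>g (z - x)\<bar>) + B"
    if "finite F" for F
  proof -
    have far: "F - S \<subseteq> {z. R < znorm z}"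
    proof
      fix z assume "z \<in> F - S"
      then have "2 * R < znorm z \<or> 2 * R < znorm (z - x)" unfolding S_def by auto
      then show "z \<in> {z. R < znorm z}"
        using znorm_diff_le[of z x] \<open>znorm x \<le> R\<close> \<open>0 \<le> R\<close> by auto
    qed
    have far_shifted: "(\<lambda>z. z - x) ` (F - S) \<subseteq> {z. R < znorm z}"
    proof
      fix w assume "w \<in> (\<lambda>z. z - x) ` (F - S)"
      then obtain z where "z \<in> F - S" "w = z - x" by auto
      then have "2 * R < znorm z \<or> 2 * R < znorm w" unfolding S_def by auto
      then show "w \<in> {z. R < znorm z}"
        using znorm_le_diff[of z x] \<open>w = z - x\<close> \<open>znorm x \<le> R\<close> \<open>0 \<le> R\<close> by auto
    qed
    have "(\<Sum>z\<in>F. g z * g (z - x)) = (\<Sum>z\<in>F \<inter> S. g z * g (z - x)) + (\<Sum>z\<in>F - S. g z * g (z - x))"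
      using \<open>finite F\<close> by (simp add: sum.Int_Diff)
    also have "(\<Sum>z\<in>F \<inter> S. g z * g (z - x)) \<le> (\<Sum>z\<in>S. \<bar>g z\<bar> * \<bar>g (z - x)\<bar>)"
    proof -
      have "(\<Sum>z\<in>F \<inter> S. g z * g (z - x)) \<le> (\<Sum>z\<in>F \<inter> S. \<bar>g z\<bar> * \<bar>g (z - x)\<bar>)"
        by (intro sum_mono) (metis abs_ge_self abs_mult)
      also have "\<dots> \<le> (\<Sum>z\<in>S. \<bar>g z\<bar> * \<bar>g (z - x)\<bar>)"
        using \<open>finite S\<close> by (intro sum_mono2) auto
      finally show ?thesis .
    qed
    also have "(\<Sum>z\<in>F - S. g z * g (z - x)) \<le> (\<Sum>z\<in>F - S. ((g z)^2 + (g (z - x))^2) / 2)"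
    proof (rule sum_mono)
      fix z
      have "0 \<le> (g z - g (z - x))^2" by simp
      then show "g z * g (z - x) \<le> ((g z)^2 + (g (z - x))^2) / 2"
        by (simp add: power2_eq_square algebra_simps)
    qed
    also have "\<dots> = (\<Sum>z\<in>F - S. (g z)^2) / 2 + (\<Sum>w\<in>(\<lambda>z. z - x) ` (F - S). (g w)^2) / 2"
      by (simp add: sum.reindex inj_on_def sum.distrib add_divide_distrib sum_divide_distrib)
    also have "\<dots> \<le> B / 2 + B / 2"
      using tail[OF _ far] tail[OF _ far_shifted] \<open>finite F\<close> by (intro add_mono divide_right_mono) auto
    finally show ?thesis by simp
  qed
  show ?thesis
  proof (cases "(\<lambda>z. g z * g (z - x)) summable_on UNIV")
    case True
    then show ?thesis
      unfolding S_def[symmetric] using finite_sums by (intro infsum_le_finite_sums) auto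
  next
    case False
    then have "infsum (\<lambda>z. g z * g (z - x)) UNIV = 0"
      by (rule infsum_not_exists)
    moreover have "0 \<le> (\<Sum>z\<in>S. \<bar>g z\<bar> * \<bar>g (z - x)\<bar>)" by (intro sum_nonneg) auto
    ultimately show ?thesis
      unfolding S_def[symmetric] using \<open>0 \<le> B\<close> by simp
  qed
qed

lemma sum_shift_products_le_square:
  fixes a :: "int ^ 'n \<Rightarrow> real"
  assumes a_nonneg: "\<And>z. 0 \<le> a z" and "0 \<le> R"
  shows "(\<Sum>x\<in>{x. znorm x \<le> R}. \<Sum>z\<in>{z. znorm z \<le> 2 * R \<and> znorm (z - x) \<le> 2 * R}. a z * a (z - x))
           \<le> (\<Sum>z\<in>{z. znorm z \<le> 2 * R}. a z)^2"
proof -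
  define X where "X = {x :: int ^ 'n. znorm x \<le> R}"
  define S where "S x = {z :: int ^ 'n. znorm z \<le> 2 * R \<and> znorm (z - x) \<le> 2 * R}" for x
  define D where "D = {z :: int ^ 'n. znorm z \<le> 2 * R}"
  have "finite X" "finite D"
    unfolding X_def D_def by (rule finite_znorm_ball)+
  moreover have "finite (S x)" for x
    unfolding S_def by (rule finite_subset[OF _ finite_znorm_ball[of "2 * R"]]) auto
  ultimately have "(\<Sum>x\<in>X. \<Sum>z\<in>S x. a z * a (z - x)) = (\<Sum>p\<in>Sigma X S. a (snd p) * a (snd p - fst p))"
    by (simp add: sum.Sigma split_def)
  also have "\<dots> = (\<Sum>q\<in>(\<lambda>p. (snd p, snd p - fst p)) ` Sigma X S. a (fst q) * a (snd q))"
    by (subst sum.reindex) (auto simp: inj_on_def)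
  also have "\<dots> \<le> (\<Sum>q\<in>D \<times> D. a (fst q) * a (snd q))"
    using \<open>finite D\<close> by (intro sum_mono2) (auto simp: S_def D_def a_nonneg)
  also have "\<dots> = (\<Sum>z\<in>D. a z)^2"
    by (simp add: sum_product sum.cartesian_product split_def power2_eq_square)
  finally show ?thesis unfolding X_def S_def D_def .
qed

lemma correlation_sum_le:
  fixes g :: "int ^ 'n \<Rightarrow> real"
  assumes tail: "\<And>F. finite F \<Longrightarrow> F \<subseteq> {z. R < znorm z} \<Longrightarrow> (\<Sum>z\<in>F. (g z)^2) \<le> B"
    and "0 \<le> R"
  shows "(\<Sum>x\<in>{x. znorm x \<le> R}. infsum (\<lambda>z. g z * g (z - x)) UNIV)
           \<le> (\<Sum>z\<in>{z. znorm z \<le> 2 * R}. \<bar>g z\<bar>)^2 + real (card {x :: int ^ 'n. znorm x \<le> R}) * B"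
proof -
  have "(\<Sum>x\<in>{x. znorm x \<le> R}. infsum (\<lambda>z. g z * g (z - x)) UNIV)
       \<le> (\<Sum>x\<in>{x. znorm x \<le> R}.
            (\<Sum>z\<in>{z. znorm z \<le> 2 * R \<and> znorm (z - x) \<le> 2 * R}. \<bar>g z\<bar> * \<bar>g (z - x)\<bar>) + B)"
    by (intro sum_mono infsum_shift_product_le[OF tail]) auto
  also have "\<dots> = (\<Sum>x\<in>{x. znorm x \<le> R}.
                     \<Sum>z\<in>{z. znorm z \<le> 2 * R \<and> znorm (z - x) \<le> 2 * R}. \<bar>g z\<bar> * \<bar>g (z - x)\<bar>)
                  + real (card {x :: int ^ 'n. znorm x \<le> R}) * B"
    by (simp add: sum.distrib)
  also have "\<dots> \<le> (\<Sum>z\<in>{z. znorm z \<le> 2 * R}. \<bar>g z\<bar>)^2 + real (card {x :: int ^ 'n. znorm x \<le> R}) * B"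
    using sum_shift_products_le_square[of "\<lambda>z. \<bar>g z\<bar>" R] \<open>0 \<le> R\<close> by simp
  finally show ?thesis .
qed

lemma correlation_sum_le_high_dim:
  fixes g :: "int ^ 'n \<Rightarrow> real"
  assumes "3 \<le> CARD('n)" "1 \<le> R0" "0 \<le> C"
    and shells: "\<And>r. R0 \<le> r \<Longrightarrow>
      (\<Sum>z\<in>{z. r < znorm z \<and> znorm z \<le> 2 * r}. (g z)^2) \<le> C * r powr (2 - real CARD('n))"
    and ball: "(\<Sum>z\<in>{z. znorm z \<le> 2 * R}. \<bar>g z\<bar>) \<le> A * R"
    and "R0 \<le> R"
  shows "(\<Sum>x\<in>{x. znorm x \<le> R}. infsum (\<lambda>z. g z * g (z - x)) UNIV)
           \<le> (A^2 + 2 * 3 ^ CARD('n) * C) * R^2"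
proof -
  have "R0 > 0" "R \<ge> 1" using assms by auto
  have tail: "(\<Sum>z\<in>F. (g z)^2) \<le> 2 * C * R powr (2 - real CARD('n))"
    if "finite F" "F \<subseteq> {z. R < znorm z}" for F
    by (rule tail_sum_le_of_power_shells[OF finite_znorm_ball \<open>R0 > 0\<close>]) (use assms that in auto)
  have "(\<Sum>x\<in>{x. znorm x \<le> R}. infsum (\<lambda>z. g z * g (z - x)) UNIV)
        \<le> (\<Sum>z\<in>{z. znorm z \<le> 2 * R}. \<bar>g z\<bar>)^2
          + real (card {x :: int ^ 'n. znorm x \<le> R}) * (2 * C * R powr (2 - real CARD('n)))"
    using \<open>R \<ge> 1\<close> by (intro correlation_sum_le tail) auto
  also have "\<dots> \<le> (A * R)^2 + 3 ^ CARD('n) * R ^ CARD('n) * (2 * C * R powr (2 - real CARD('n)))"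
    using ball card_znorm_ball_le_power[OF \<open>R \<ge> 1\<close>, where 'n = 'n] \<open>0 \<le> C\<close>
    by (intro add_mono power_mono mult_right_mono) (auto simp: sum_nonneg)
  also have "\<dots> = (A^2 + 2 * 3 ^ CARD('n) * C) * R^2"
    using power_mult_powr_diff[of R "CARD('n)" 2] \<open>R \<ge> 1\<close>
    by (simp add: algebra_simps power_mult_distrib)
  finally show ?thesis .
qed

lemma correlation_sum_le_planar:
  fixes g :: "int ^ 'n \<Rightarrow> real"
  assumes "CARD('n) = 2" "1 \<le> R0" "0 \<le> C" "0 \<le> s"
    and shells: "\<And>r. R0 \<le> r \<Longrightarrow>
      (\<Sum>z\<in>{z. r < znorm z \<and> znorm z \<le> 2 * r}. (g z)^2) \<le> C * (min 1 (s / r))^2"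
    and ball: "(\<Sum>z\<in>{z. znorm z \<le> 2 * R}. \<bar>g z\<bar>) \<le> A * R"
    and "R0 \<le> R"
  shows "(\<Sum>x\<in>{x. znorm x \<le> R}. infsum (\<lambda>z. g z * g (z - x)) UNIV)
           \<le> (A^2 + 36 * C) * (R^2 * max 1 (ln (s / R)))"
proof -
  define M where "M = max 1 (ln (s / R))"
  have "R0 > 0" "R \<ge> 1" using assms by auto
  have tail: "(\<Sum>z\<in>F. (g z)^2) \<le> C * log_majorant (s / R)"
    if "finite F" "F \<subseteq> {z. R < znorm z}" for F
    by (rule tail_sum_le_of_planar_shells[OF finite_znorm_ball \<open>R0 > 0\<close>]) (use assms that in auto)
  have "(\<Sum>x\<in>{x. znorm x \<le> R}. infsum (\<lambda>z. g z * g (z - x)) UNIV)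
        \<le> (\<Sum>z\<in>{z. znorm z \<le> 2 * R}. \<bar>g z\<bar>)^2
          + real (card {x :: int ^ 'n. znorm x \<le> R}) * (C * log_majorant (s / R))"
    using \<open>R \<ge> 1\<close> by (intro correlation_sum_le tail) auto
  also have "\<dots> \<le> (A * R)^2 + 3 ^ CARD('n) * R ^ CARD('n) * (C * (4 * M))"
    using ball card_znorm_ball_le_power[OF \<open>R \<ge> 1\<close>, where 'n = 'n] \<open>0 \<le> C\<close>
      log_majorant_le[of "s / R"] log_majorant_nonneg[of "s / R"] \<open>0 \<le> s\<close> \<open>R \<ge> 1\<close>
    unfolding M_def by (intro add_mono power_mono mult_mono mult_left_mono) (auto simp: sum_nonneg)
  also have "\<dots> = A^2 * R^2 + 36 * C * (R^2 * M)"
    using \<open>CARD('n) = 2\<close> by (simp add: power_mult_distrib)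
  also have "\<dots> \<le> (A^2 + 36 * C) * (R^2 * M)"
    using \<open>0 \<le> C\<close> mult_left_mono[of 1 M "A^2 * R^2"] by (simp add: M_def algebra_simps)
  finally show ?thesis unfolding M_def .
qed

lemma correlation_sum_le_of_shells:
  fixes g :: "int ^ 'n \<Rightarrow> real"
  assumes "2 \<le> CARD('n)" "1 \<le> R0" "0 \<le> C" "0 \<le> s"
    and shells: "\<And>r. R0 \<le> r \<Longrightarrow> (\<Sum>z\<in>{z. r < znorm z \<and> znorm z \<le> 2 * r}. (g z)^2)
      \<le> C * (if CARD('n) = 2 then (min 1 (s / r))^2 else r powr (2 - real CARD('n)))"
    and base: "(\<Sum>z\<in>{z. znorm z \<le> 2 * R0}. (g z)^2) \<le> B"
    and "R0 \<le> R"
  shows "(\<Sum>x\<in>{x. znorm x \<le> R}. infsum (\<lambda>z. g z * g (z - x)) UNIV)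
           \<le> ((4 * sqrt (C * 5 ^ CARD('n)) + sqrt (real (card {z :: int ^ 'n. znorm z \<le> 2 * R0}) * B))^2
               + 4 * 3 ^ CARD('n) * C)
             * (if CARD('n) = 2 then R^2 * max 1 (ln (s / R)) else R^2)"
proof -
  define A where "A = 4 * sqrt (C * 5 ^ CARD('n)) + sqrt (real (card {z :: int ^ 'n. znorm z \<le> 2 * R0}) * B)"
  have shells_powr: "(\<Sum>z\<in>{z. r < znorm z \<and> znorm z \<le> 2 * r}. (g z)^2) \<le> C * r powr (2 - real CARD('n))"
    if "R0 \<le> r" for r
  proof -
    have "(min 1 (s / r))^2 \<le> 1"
      using that \<open>1 \<le> R0\<close> \<open>0 \<le> s\<close> by (intro power_le_one) auto
    then show ?thesis
      using shells[OF that] mult_left_mono[of "(min 1 (s / r))^2" 1 C] \<open>0 \<le> C\<close> that \<open>1 \<le> R0\<close>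
      by (auto split: if_splits)
  qed
  have ball: "(\<Sum>z\<in>{z. znorm z \<le> 2 * R}. \<bar>g z\<bar>) \<le> A * R"
    unfolding A_def using assms(2,3,7) by (intro znorm_ball_abs_sum_le shells_powr base)
  show ?thesis
  proof (cases "CARD('n) = 2")
    case True
    then show ?thesis
      using correlation_sum_le_planar[OF True assms(2-4) _ ball \<open>R0 \<le> R\<close>] shells
      unfolding A_def[symmetric] by simp
  next
    case False
    then have "3 \<le> CARD('n)" using assms(1) by simp
    have "(A^2 + 2 * 3 ^ CARD('n) * C) * R^2 \<le> (A^2 + 4 * 3 ^ CARD('n) * C) * R^2"
      using \<open>0 \<le> C\<close> by (intro mult_right_mono) auto
    then show ?thesis
      using correlation_sum_le_high_dim[OF \<open>3 \<le> CARD('n)\<close> assms(2,3) shells_powr ball \<open>R0 \<le> R\<close>] False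
      unfolding A_def[symmetric] by simp
  qed
qed

theorem lemma2p10:
  fixes h :: "real \<Rightarrow> int ^ 'n \<Rightarrow> real"
  assumes "CARD('n) \<ge> 2"
    and "\<exists>C R0. \<forall>T>0. \<forall>R\<ge>R0.
           (\<Sum>z\<in>{z. R < znorm z \<and> znorm z \<le> 2 * R}. (h T z)^2)
             \<le> C * (if CARD('n) = 2 then (min 1 (sqrt T / R))^2
                    else R powr (2 - real CARD('n)))"
    and "\<forall>R. \<exists>C. \<forall>T>0. (\<Sum>z\<in>{z. znorm z \<le> R}. (h T z)^2) \<le> C"
  shows "\<exists>C R0. \<forall>T>0. \<forall>R\<ge>R0.
           (\<Sum>x\<in>{x. znorm x \<le> R}. infsum (\<lambda>z. h T z * h T (z - x)) UNIV)
             \<le> C * (if CARD('n) = 2 then R^2 * max 1 (ln (sqrt T / R)) else R^2)"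
proof -
  obtain C0 R0 where shells0: "\<And>T r. 0 < T \<Longrightarrow> R0 \<le> r \<Longrightarrow>
      (\<Sum>z\<in>{z. r < znorm z \<and> znorm z \<le> 2 * r}. (h T z)^2)
        \<le> C0 * (if CARD('n) = 2 then (min 1 (sqrt T / r))^2 else r powr (2 - real CARD('n)))"
    using assms(2) by blast
  define C where "C = max C0 0"
  define R1 where "R1 = max R0 1"
  obtain B where base: "\<And>T. 0 < T \<Longrightarrow> (\<Sum>z\<in>{z. znorm z \<le> 2 * R1}. (h T z)^2) \<le> B"
    using assms(3) by blast
  have shells: "(\<Sum>z\<in>{z. r < znorm z \<and> znorm z \<le> 2 * r}. (h T z)^2)
      \<le> C * (if CARD('n) = 2 then (min 1 (sqrt T / r))^2 else r powr (2 - real CARD('n)))"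
    if "0 < T" "R1 \<le> r" for T r
  proof -
    have "C0 * (if CARD('n) = 2 then (min 1 (sqrt T / r))^2 else r powr (2 - real CARD('n)))
        \<le> C * (if CARD('n) = 2 then (min 1 (sqrt T / r))^2 else r powr (2 - real CARD('n)))"
      by (intro mult_right_mono) (auto simp: C_def)
    then show ?thesis
      using shells0[OF that(1), of r] that(2) unfolding R1_def by linarith
  qed
  show ?thesis
  proof (intro exI allI impI)
    fix T R :: real
    assume "0 < T" "R1 \<le> R"
    then show "(\<Sum>x\<in>{x. znorm x \<le> R}. infsum (\<lambda>z. h T z * h T (z - x)) UNIV)
        \<le> ((4 * sqrt (C * 5 ^ CARD('n)) + sqrt (real (card {z :: int ^ 'n. znorm z \<le> 2 * R1}) * B))^2
            + 4 * 3 ^ CARD('n) * C)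
          * (if CARD('n) = 2 then R^2 * max 1 (ln (sqrt T / R)) else R^2)"
      using assms(1) shells base by (intro correlation_sum_le_of_shells) (auto simp: C_def R1_def)
  qed
qed

end
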